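(* Let $W_{10}^l,W_{20}^l$ ($l\in[L]$) have i.i.d. $\mathcal N(0,1)$ entries, and (on the event $\|W_{10}^l\|\le c_{10}\sqrt n$, $\|W_{20}^l\|\le c_{20}\sqrt m$ for all $l$, with $c_{10}=1+2\sqrt m/\sqrt n$, $c_{20}=3$) let $\mathbf W_1\in B(\mathbf W_{10},R_1)$, $\mathbf W_2\in B(\mathbf W_{20},R_2)$. Then for every $l\in[L]$: for LISTA, $\|\mathbf x^l\|\le c^l_{\mathrm{ISTA};\mathbf x}$; for ADMM-CSNet, $\|\mathbf z^l\|\le c^l_{\mathrm{ADMM};\mathbf z}$ and $\|\mathbf u^l\|\le c^l_{\mathrm{ADMM};\mathbf u}$, where $c^0_{\mathrm{ISTA};\mathbf x}=\sqrt m C_x$, $c^0_{\mathrm{ADMM};\mathbf z}=\sqrt m C_z$, $c^0_{\mathrm{ADMM};\mathbf u}=\sqrt m C_u$ and $$c^l_{\mathrm{ISTA};\mathbf x}=L_\sigma\Big(c_{10}+\tfrac{R_1}{\sqrt n}\Big)\sqrt nC_y+L_\sigma\Big(c_{20}+\tfrac{R_2}{\sqrt m}\Big)c^{l-1}_{\mathrm{ISTA};\mathbf x}+\sigma(0)=O(\sqrt m),$$ $$c^l_{\mathrm{ADMM};\mathbf z}=L_\sigma\Big(c_{10}+\tfrac{R_1}{\sqrt n}\Big)\sqrt nC_y+L_\sigma\Big(c_{20}+\tfrac{R_2}{\sqrt m}\Big)c^{l-1}_{\mathrm{ADMM};\mathbf z}+L_\sigma\Big(1+c_{20}+\tfrac{R_2}{\sqrt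 m}\Big)c^{l-1}_{\mathrm{ADMM};\mathbf u}+\sigma(0)=O(\sqrt m),$$ $$c^l_{\mathrm{ADMM};\mathbf u}=\Big(c_{10}+\tfrac{R_1}{\sqrt n}\Big)\sqrt nC_y+\Big(c_{20}+\tfrac{R_2}{\sqrt m}\Big)c^{l-1}_{\mathrm{ADMM};\mathbf z}+\Big(c_{20}+\tfrac{R_2}{\sqrt m}+1\Big)c^{l-1}_{\mathrm{ADMM};\mathbf u}+c^l_{\mathrm{ADMM};\mathbf z}=O(\sqrt m).$$
   Context: Fix $L,n,m\ge1$, $\lambda>0$ and $\sigma(x)=\log(1+e^{x-\lambda})-\log(1+e^{-x-\lambda})$ (componentwise), $L_\sigma$-Lipschitz. Input $\mathbf y\in\mathbb R^n$ with $|y_i|\le C_y$. Parameters $W_1^l\in\mathbb R^{m\times n}$, $W_2^l\in\mathbb R^{m\times m}$; $\mathbf W_1=(W_1^l)_{l}$, $\mathbf W_2=(W_2^l)_l$, initial values $\mathbf W_{10},\mathbf W_{20}$; $B(\mathbf W_{10},R_1)=\{\mathbf W_1:\|\mathbf W_1-\mathbf W_{10}\|_F\le R_1\}$ (Frobenius over all entries), similarly for $\mathbf W_2$. LISTA: $\mathbf x^0$ with $|x^0_i|\le C_x$, $\mathbf x^l=\sigma\big(\frac1{\sqrt n}W_1^l\mathbf y+\frac1{\sqrt m}W_2^l\mathbf x^{l-1}\big)$. ADMM-CSNet: $\mathbf z^0,\mathbf u^0$ with $|z^0_i|\le C_z$, $|u^0_i|\le C_u$; $\mathbf x^l=\frac1{\sqrt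 n}W_1^l\mathbf y+\frac1{\sqrt m}W_2^l(\mathbf z^{l-1}-\mathbf u^{l-1})$, $\mathbf z^l=\sigma(\mathbf x^l+\mathbf u^{l-1})$, $\mathbf u^l=\mathbf u^{l-1}+\mathbf x^l-\mathbf z^l$. $\|\cdot\|$ is the Euclidean norm; $O(\cdot)$ is with respect to $m$. *)

theory Defs
  imports "HOL-Analysis.Analysis" "HOL-Library.Landau_Symbols"
begin

text \<open>Vectors of dimension d are functions nat => real, only indices < d matter.
 Matrices of size r x c are functions nat => nat => real, indices i < r, j < c.
 Layer-indexed weights are functions of the layer index l (layers 1..L).\<close>

definition sig :: "real \<Rightarrow> real \<Rightarrow> real" where
  "sig lam x = ln (1 + exp (x - lam)) - ln (1 + exp (- x - lam))"

definition vnorm :: "nat \<Rightarrow> (nat \<Rightarrow> real) \<Rightarrow> real" where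
  "vnorm d v = sqrt (\<Sum>i<d. (v i)^2)"

definition matvec :: "(nat \<Rightarrow> nat \<Rightarrow> real) \<Rightarrow> nat \<Rightarrow> (nat \<Rightarrow> real) \<Rightarrow> (nat \<Rightarrow> real)" where
  "matvec A c v = (\<lambda>i. \<Sum>j<c. A i j * v j)"

definition opnorm :: "nat \<Rightarrow> nat \<Rightarrow> (nat \<Rightarrow> nat \<Rightarrow> real) \<Rightarrow> real" where
  "opnorm r c A = Sup {vnorm r (matvec A c v) | v. vnorm c v \<le> 1}"

definition frob_dist :: "nat \<Rightarrow> nat \<Rightarrow> nat \<Rightarrow> (nat \<Rightarrow> nat \<Rightarrow> nat \<Rightarrow> real) \<Rightarrow> (nat \<Rightarrow> nat \<Rightarrow> nat \<Rightarrow> real) \<Rightarrow> real" where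
  "frob_dist L r c W V = sqrt (\<Sum>l\<in>{1..L}. \<Sum>i<r. \<Sum>j<c. (W l i j - V l i j)^2)"

primrec lista :: "real \<Rightarrow> nat \<Rightarrow> nat \<Rightarrow> (nat \<Rightarrow> nat \<Rightarrow> nat \<Rightarrow> real) \<Rightarrow> (nat \<Rightarrow> nat \<Rightarrow> nat \<Rightarrow> real)
   \<Rightarrow> (nat \<Rightarrow> real) \<Rightarrow> (nat \<Rightarrow> real) \<Rightarrow> nat \<Rightarrow> (nat \<Rightarrow> real)" where
  "lista lam n m W1 W2 y x0 0 = x0"
| "lista lam n m W1 W2 y x0 (Suc l) =
     (\<lambda>i. sig lam (1 / sqrt n * matvec (W1 (Suc l)) n y i
                  + 1 / sqrt m * matvec (W2 (Suc l)) m (lista lam n m W1 W2 y x0 l) i))"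

primrec admm :: "real \<Rightarrow> nat \<Rightarrow> nat \<Rightarrow> (nat \<Rightarrow> nat \<Rightarrow> nat \<Rightarrow> real) \<Rightarrow> (nat \<Rightarrow> nat \<Rightarrow> nat \<Rightarrow> real)
   \<Rightarrow> (nat \<Rightarrow> real) \<Rightarrow> (nat \<Rightarrow> real) \<Rightarrow> (nat \<Rightarrow> real) \<Rightarrow> nat \<Rightarrow> (nat \<Rightarrow> real) \<times> (nat \<Rightarrow> real)" where
  "admm lam n m W1 W2 y z0 u0 0 = (z0, u0)"
| "admm lam n m W1 W2 y z0 u0 (Suc l) =
     (let (z, u) = admm lam n m W1 W2 y z0 u0 l;
          x = (\<lambda>i. 1 / sqrt n * matvec (W1 (Suc l)) n y i
                    + 1 / sqrt m * matvec (W2 (Suc l)) m (\<lambda>k. z k - u k) i);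
          z' = (\<lambda>i. sig lam (x i + u i));
          u' = (\<lambda>i. u i + x i - z' i)
      in (z', u'))"

definition c10 :: "nat \<Rightarrow> nat \<Rightarrow> real" where
  "c10 n m = 1 + 2 * sqrt m / sqrt n"

definition c20 :: real where "c20 = 3"

primrec cISTA :: "real \<Rightarrow> real \<Rightarrow> nat \<Rightarrow> nat \<Rightarrow> real \<Rightarrow> real \<Rightarrow> real \<Rightarrow> real \<Rightarrow> nat \<Rightarrow> real" where
  "cISTA lam Ls n m R1 R2 Cy Cx 0 = sqrt m * Cx"
| "cISTA lam Ls n m R1 R2 Cy Cx (Suc l) =
     Ls * (c10 n m + R1 / sqrt n) * sqrt n * Cy
     + Ls * (c20 + R2 / sqrt m) * cISTA lam Ls n m R1 R2 Cy Cx l + sig lam 0"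

primrec cADMM :: "real \<Rightarrow> real \<Rightarrow> nat \<Rightarrow> nat \<Rightarrow> real \<Rightarrow> real \<Rightarrow> real \<Rightarrow> real \<Rightarrow> real \<Rightarrow> nat \<Rightarrow> real \<times> real" where
  "cADMM lam Ls n m R1 R2 Cy Cz Cu 0 = (sqrt m * Cz, sqrt m * Cu)"
| "cADMM lam Ls n m R1 R2 Cy Cz Cu (Suc l) =
     (let (cz, cu) = cADMM lam Ls n m R1 R2 Cy Cz Cu l;
          cz' = Ls * (c10 n m + R1 / sqrt n) * sqrt n * Cy
                + Ls * (c20 + R2 / sqrt m) * cz
                + Ls * (1 + c20 + R2 / sqrt m) * cu + sig lam 0;
          cu' = (c10 n m + R1 / sqrt n) * sqrt n * Cy
                + (c20 + R2 / sqrt m) * cz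
                + (c20 + R2 / sqrt m + 1) * cu + cz'
      in (cz', cu'))"

end

theory Submission
  imports Defs "HOL-Real_Asymp.Real_Asymp"
begin

text \<open>With the operator norm of the
  initial weights and the Frobenius distance to them, the pre-activation has norm at most
  \<open>A + B \<parallel>v\<parallel>\<close> for the previous iterate \<open>v\<close>, where \<open>A = (c\<^sub>1\<^sub>0 + R\<^sub>1/\<surd>n) \<surd>n C\<^sub>y\<close> and
  \<open>B = c\<^sub>2\<^sub>0 + R\<^sub>2/\<surd>m\<close>; since \<open>\<sigma>(0) = 0\<close> the activation scales norms by at most \<open>L\<^sub>\<sigma>\<close>. As functions of \<open>m\<close>, \<open>A = O(\<surd>m)\<close>, \<open>B = O(1)\<close> and
  the initial bounds are \<open>O(\<surd>m)\<close>, so the recursions stay \<open>O(\<surd>m)\<close>.\<close>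

lemma vnorm_eq_L2_set: "vnorm d v = L2_set v {..<d}"
  by (simp add: vnorm_def L2_set_def)

lemma vnorm_nonneg: "0 \<le> vnorm d v"
  by (simp add: vnorm_eq_L2_set)

lemma vnorm_add_le: "vnorm d (\<lambda>i. f i + g i) \<le> vnorm d f + vnorm d g"
  unfolding vnorm_eq_L2_set by (rule L2_set_triangle_ineq)

lemma vnorm_minus: "vnorm d (\<lambda>i. - f i) = vnorm d f"
  by (simp add: vnorm_def)

lemma vnorm_diff_le: "vnorm d (\<lambda>i. f i - g i) \<le> vnorm d f + vnorm d g"
  using vnorm_add_le[of d f "\<lambda>i. - g i"] by (simp add: vnorm_minus)

lemma vnorm_scale: "vnorm d (\<lambda>i. a * f i) = \<bar>a\<bar> * vnorm d f"
  by (simp add: vnorm_def power_mult_distrib real_sqrt_mult flip: sum_distrib_left)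

lemma vnorm_le_sqrt_dim:
  assumes "\<And>i. i < d \<Longrightarrow> \<bar>v i\<bar> \<le> C"
  shows "vnorm d v \<le> sqrt d * C"
proof (cases "d = 0")
  case False
  have "(v i)\<^sup>2 \<le> C\<^sup>2" if "i < d" for i
    using assms[OF that] by (metis abs_ge_zero power2_abs power_mono)
  then have "(\<Sum>i<d. (v i)\<^sup>2) \<le> (\<Sum>i<d. C\<^sup>2)"
    by (intro sum_mono) simp
  then have "vnorm d v \<le> sqrt (d * C\<^sup>2)"
    by (simp add: vnorm_def)
  also have "\<dots> = sqrt d * \<bar>C\<bar>"
    by (simp add: real_sqrt_mult)
  finally have "vnorm d v \<le> sqrt d * \<bar>C\<bar>" .
  moreover have "0 \<le> C"
    using assms[of 0] False by simp
  ultimately show ?thesis by simp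
qed (simp add: vnorm_def)

definition frob_norm :: "nat \<Rightarrow> nat \<Rightarrow> (nat \<Rightarrow> nat \<Rightarrow> real) \<Rightarrow> real" where
  "frob_norm r c A = sqrt (\<Sum>i<r. \<Sum>j<c. (A i j)\<^sup>2)"

lemma frob_norm_nonneg: "0 \<le> frob_norm r c A"
  by (simp add: frob_norm_def sum_nonneg)

lemma matvec_le_frob_norm: "vnorm r (matvec A c v) \<le> frob_norm r c A * vnorm c v"
proof -
  have row: "(matvec A c v i)\<^sup>2 \<le> (\<Sum>j<c. (A i j)\<^sup>2) * (\<Sum>j<c. (v j)\<^sup>2)" for i
  proof -
    have "\<bar>matvec A c v i\<bar> \<le> L2_set (A i) {..<c} * L2_set v {..<c}"
      unfolding matvec_def
      by (rule order_trans[OF sum_abs]) (simp add: abs_mult L2_set_mult_ineq)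
    then have "(matvec A c v i)\<^sup>2 \<le> (L2_set (A i) {..<c} * L2_set v {..<c})\<^sup>2"
      by (metis abs_ge_zero power2_abs power_mono)
    then show ?thesis
      by (simp add: L2_set_def power_mult_distrib sum_nonneg)
  qed
  have "(\<Sum>i<r. (matvec A c v i)\<^sup>2) \<le> (\<Sum>i<r. (\<Sum>j<c. (A i j)\<^sup>2) * (\<Sum>j<c. (v j)\<^sup>2))"
    by (intro sum_mono row)
  also have "\<dots> = (\<Sum>i<r. \<Sum>j<c. (A i j)\<^sup>2) * (\<Sum>j<c. (v j)\<^sup>2)"
    by (simp add: sum_distrib_right)
  finally show ?thesis
    by (simp add: vnorm_def frob_norm_def flip: real_sqrt_mult)
qed

lemma matvec_scale: "matvec A c (\<lambda>j. t * v j) = (\<lambda>i. t * matvec A c v i)"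
  by (simp add: matvec_def sum_distrib_left mult.left_commute)

lemma matvec_le_opnorm: "vnorm r (matvec A c v) \<le> opnorm r c A * vnorm c v"
proof -
  have unit_ball: "vnorm r (matvec A c w) \<le> opnorm r c A" if "vnorm c w \<le> 1" for w
    unfolding opnorm_def
  proof (rule cSup_upper)
    show "bdd_above {vnorm r (matvec A c v) |v. vnorm c v \<le> 1}"
    proof (rule bdd_aboveI, clarify)
      fix v :: "nat \<Rightarrow> real" assume "vnorm c v \<le> 1"
      then have "frob_norm r c A * vnorm c v \<le> frob_norm r c A"
        using frob_norm_nonneg by (simp add: mult_left_le)
      then show "vnorm r (matvec A c v) \<le> frob_norm r c A"
        using matvec_le_frob_norm order_trans by blast
    qed
  qed (use that in blast)
  show ?thesis
  proof (cases "vnorm c v = 0")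
    case True
    then have "\<forall>j<c. v j = 0"
      by (simp add: vnorm_eq_L2_set L2_set_eq_0_iff)
    then show ?thesis
      using True by (simp add: matvec_def vnorm_def)
  next
    case False
    define t where "t = vnorm c v"
    have "t > 0"
      using False vnorm_nonneg[of c v] by (simp add: t_def)
    have "(1 / t) * vnorm r (matvec A c v) = vnorm r (matvec A c (\<lambda>j. (1 / t) * v j))"
      unfolding matvec_scale vnorm_scale using \<open>t > 0\<close> by simp
    also have "\<dots> \<le> opnorm r c A"
      using \<open>t > 0\<close> by (intro unit_ball) (simp only: vnorm_scale, simp add: t_def)
    finally show ?thesis
      using \<open>t > 0\<close> by (simp add: t_def field_simps)
  qed
qed

lemma matvec_le_perturbed_opnorm:
  assumes "opnorm r c V \<le> K" and "frob_norm r c (\<lambda>i j. W i j - V i j) \<le> R"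
  shows "vnorm r (matvec W c v) \<le> (K + R) * vnorm c v"
proof -
  have "matvec W c v = (\<lambda>i. matvec V c v i + matvec (\<lambda>i j. W i j - V i j) c v i)"
    by (simp add: matvec_def algebra_simps sum_subtractf)
  then have "vnorm r (matvec W c v)
      \<le> vnorm r (matvec V c v) + vnorm r (matvec (\<lambda>i j. W i j - V i j) c v)"
    by (simp add: vnorm_add_le)
  also have "\<dots> \<le> opnorm r c V * vnorm c v + frob_norm r c (\<lambda>i j. W i j - V i j) * vnorm c v"
    by (intro add_mono matvec_le_opnorm matvec_le_frob_norm)
  also have "\<dots> \<le> (K + R) * vnorm c v"
    using assms vnorm_nonneg[of c v] by (simp add: distrib_right add_mono mult_right_mono)
  finally show ?thesis .
qed

lemma frob_norm_layer_le_frob_dist: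
  assumes "l \<in> {1..L}"
  shows "frob_norm r c (\<lambda>i j. W l i j - V l i j) \<le> frob_dist L r c W V"
  unfolding frob_norm_def frob_dist_def
  by (intro real_sqrt_le_mono member_le_sum[OF assms]) (auto intro!: sum_nonneg)

lemma frob_dist_nonneg: "0 \<le> frob_dist L r c W V"
  by (simp add: frob_dist_def sum_nonneg)

lemma sig_zero: "sig lam 0 = 0"
  by (simp add: sig_def)

lemma vnorm_comp_le:
  assumes "\<And>a. \<bar>f a\<bar> \<le> K * \<bar>a\<bar>"
  shows "vnorm d (\<lambda>i. f (w i)) \<le> K * vnorm d w"
proof -
  have "0 \<le> K"
    using order_trans[OF abs_ge_zero assms[of 1]] by simp
  have "vnorm d (\<lambda>i. f (w i)) = L2_set (\<lambda>i. \<bar>f (w i)\<bar>) {..<d}"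
    by (simp add: vnorm_def L2_set_def)
  also have "\<dots> \<le> L2_set (\<lambda>i. K * \<bar>w i\<bar>) {..<d}"
    by (intro L2_set_mono assms) simp
  also have "\<dots> = K * L2_set (\<lambda>i. \<bar>w i\<bar>) {..<d}"
    using \<open>0 \<le> K\<close> by (simp add: L2_set_right_distrib)
  also have "L2_set (\<lambda>i. \<bar>w i\<bar>) {..<d} = vnorm d w"
    by (simp add: vnorm_def L2_set_def)
  finally show ?thesis .
qed

lemma lipschitz_const_nonneg:
  fixes f :: "real \<Rightarrow> real"
  assumes "\<And>a b. \<bar>f a - f b\<bar> \<le> K * \<bar>a - b\<bar>"
  shows "0 \<le> K"
  using order_trans[OF abs_ge_zero assms[of 1 0]] by simp

lemma vnorm_sig_le:
  assumes "\<And>a b. \<bar>sig lam a - sig lam b\<bar> \<le> Ls * \<bar>a - b\<bar>"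
  shows "vnorm d (\<lambda>i. sig lam (w i)) \<le> Ls * vnorm d w"
  using assms[of _ 0] by (intro vnorm_comp_le) (simp add: sig_zero)

lemma cADMM_Suc_fst:
  "fst (cADMM lam Ls n m R1 R2 Cy Cz Cu (Suc l)) =
     Ls * (c10 n m + R1 / sqrt n) * sqrt n * Cy
     + Ls * (c20 + R2 / sqrt m) * fst (cADMM lam Ls n m R1 R2 Cy Cz Cu l)
     + Ls * (1 + c20 + R2 / sqrt m) * snd (cADMM lam Ls n m R1 R2 Cy Cz Cu l) + sig lam 0"
  by (simp add: Let_def split_beta)

lemma cADMM_Suc_snd:
  "snd (cADMM lam Ls n m R1 R2 Cy Cz Cu (Suc l)) =
     (c10 n m + R1 / sqrt n) * sqrt n * Cy
     + (c20 + R2 / sqrt m) * fst (cADMM lam Ls n m R1 R2 Cy Cz Cu l)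
     + (c20 + R2 / sqrt m + 1) * snd (cADMM lam Ls n m R1 R2 Cy Cz Cu l)
     + fst (cADMM lam Ls n m R1 R2 Cy Cz Cu (Suc l))"
  by (simp add: Let_def split_beta)

context
  fixes L n m :: nat and W1 W2 W10 W20 :: "nat \<Rightarrow> nat \<Rightarrow> nat \<Rightarrow> real"
    and y :: "nat \<Rightarrow> real" and Cy R1 R2 :: real
  assumes n_pos: "n \<ge> 1" and m_pos: "m \<ge> 1"
    and y_bound: "\<And>i. i < n \<Longrightarrow> \<bar>y i\<bar> \<le> Cy"
    and W10_opnorm: "\<And>l. l \<in> {1..L} \<Longrightarrow> opnorm m n (W10 l) \<le> c10 n m * sqrt n"
    and W20_opnorm: "\<And>l. l \<in> {1..L} \<Longrightarrow> opnorm m m (W20 l) \<le> c20 * sqrt m"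
    and W1_dist: "frob_dist L m n W1 W10 \<le> R1"
    and W2_dist: "frob_dist L m m W2 W20 \<le> R2"
begin

lemma feedback_coeff_nonneg: "0 \<le> c20 + R2 / sqrt m"
  using frob_dist_nonneg[of L m m W2 W20] W2_dist by (simp add: c20_def)

lemma preactivation_vnorm_le:
  assumes "l \<in> {1..L}" and "vnorm m v \<le> c"
  shows "vnorm m (\<lambda>i. 1 / sqrt n * matvec (W1 l) n y i + 1 / sqrt m * matvec (W2 l) m v i)
    \<le> (c10 n m + R1 / sqrt n) * sqrt n * Cy + (c20 + R2 / sqrt m) * c"
proof -
  have "sqrt n > 0" "sqrt m > 0"
    using n_pos m_pos by auto
  have "0 \<le> R1"
    using frob_dist_nonneg[of L m n W1 W10] W1_dist by linarith
  have "vnorm m (matvec (W1 l) n y) \<le> (c10 n m * sqrt n + R1) * vnorm n y"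
    by (rule matvec_le_perturbed_opnorm[OF W10_opnorm[OF assms(1)]
          order_trans[OF frob_norm_layer_le_frob_dist[OF assms(1)] W1_dist]])
  also have "\<dots> \<le> (c10 n m * sqrt n + R1) * (sqrt n * Cy)"
    using vnorm_le_sqrt_dim[OF y_bound] \<open>0 \<le> R1\<close> by (intro mult_left_mono) (auto simp: c10_def)
  finally have input: "vnorm m (\<lambda>i. 1 / sqrt n * matvec (W1 l) n y i)
      \<le> (c10 n m + R1 / sqrt n) * sqrt n * Cy"
    unfolding vnorm_scale using \<open>sqrt n > 0\<close> by (simp add: field_simps)
  have "vnorm m (matvec (W2 l) m v) \<le> (c20 * sqrt m + R2) * vnorm m v"
    by (rule matvec_le_perturbed_opnorm[OF W20_opnorm[OF assms(1)]
          order_trans[OF frob_norm_layer_le_frob_dist[OF assms(1)] W2_dist]])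
  then have "vnorm m (\<lambda>i. 1 / sqrt m * matvec (W2 l) m v i) \<le> (c20 + R2 / sqrt m) * vnorm m v"
    unfolding vnorm_scale using \<open>sqrt m > 0\<close> by (simp add: field_simps)
  also have "\<dots> \<le> (c20 + R2 / sqrt m) * c"
    using assms(2) feedback_coeff_nonneg by (rule mult_left_mono)
  finally have feedback: "vnorm m (\<lambda>i. 1 / sqrt m * matvec (W2 l) m v i)
      \<le> (c20 + R2 / sqrt m) * c" .
  show ?thesis
    by (rule order_trans[OF vnorm_add_le add_mono[OF input feedback]])
qed

lemma lista_vnorm_le:
  assumes Lip: "\<And>a b. \<bar>sig lam a - sig lam b\<bar> \<le> Ls * \<bar>a - b\<bar>"
    and x0_bound: "\<And>i. i < m \<Longrightarrow> \<bar>x0 i\<bar> \<le> Cx"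
  shows "l \<le> L \<Longrightarrow> vnorm m (lista lam n m W1 W2 y x0 l) \<le> cISTA lam Ls n m R1 R2 Cy Cx l"
proof (induction l)
  case 0
  show ?case
    using vnorm_le_sqrt_dim[OF x0_bound] by simp
next
  case (Suc l)
  have "0 \<le> Ls"
    using Lip by (rule lipschitz_const_nonneg)
  have "vnorm m (lista lam n m W1 W2 y x0 (Suc l))
      \<le> Ls * vnorm m (\<lambda>i. 1 / sqrt n * matvec (W1 (Suc l)) n y i
                       + 1 / sqrt m * matvec (W2 (Suc l)) m (lista lam n m W1 W2 y x0 l) i)"
    unfolding lista.simps by (rule vnorm_sig_le[OF Lip])
  also have "\<dots> \<le> Ls * ((c10 n m + R1 / sqrt n) * sqrt n * Cy
                       + (c20 + R2 / sqrt m) * cISTA lam Ls n m R1 R2 Cy Cx l)"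
    by (rule mult_left_mono[OF preactivation_vnorm_le \<open>0 \<le> Ls\<close>]) (use Suc in auto)
  also have "\<dots> = cISTA lam Ls n m R1 R2 Cy Cx (Suc l)"
    by (simp add: sig_zero algebra_simps)
  finally show ?case .
qed

lemma admm_vnorm_le:
  assumes Lip: "\<And>a b. \<bar>sig lam a - sig lam b\<bar> \<le> Ls * \<bar>a - b\<bar>"
    and z0_bound: "\<And>i. i < m \<Longrightarrow> \<bar>z0 i\<bar> \<le> Cz"
    and u0_bound: "\<And>i. i < m \<Longrightarrow> \<bar>u0 i\<bar> \<le> Cu"
  shows "l \<le> L \<Longrightarrow>
      vnorm m (fst (admm lam n m W1 W2 y z0 u0 l)) \<le> fst (cADMM lam Ls n m R1 R2 Cy Cz Cu l)
    \<and> vnorm m (snd (admm lam n m W1 W2 y z0 u0 l)) \<le> snd (cADMM lam Ls n m R1 R2 Cy Cz Cu l)"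
proof (induction l)
  case 0
  show ?case
    using vnorm_le_sqrt_dim[OF z0_bound] vnorm_le_sqrt_dim[OF u0_bound] by simp
next
  case (Suc l)
  obtain z u where zu: "admm lam n m W1 W2 y z0 u0 l = (z, u)"
    by fastforce
  define cz cu where "cz = fst (cADMM lam Ls n m R1 R2 Cy Cz Cu l)"
    and "cu = snd (cADMM lam Ls n m R1 R2 Cy Cz Cu l)"
  define A B where "A = (c10 n m + R1 / sqrt n) * sqrt n * Cy" and "B = c20 + R2 / sqrt m"
  define x where "x = (\<lambda>i. 1 / sqrt n * matvec (W1 (Suc l)) n y i
                          + 1 / sqrt m * matvec (W2 (Suc l)) m (\<lambda>k. z k - u k) i)"
  define z' where "z' = (\<lambda>i. sig lam (x i + u i))"
  have "0 \<le> Ls"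
    using Lip by (rule lipschitz_const_nonneg)
  have z: "vnorm m z \<le> cz" and u: "vnorm m u \<le> cu"
    using Suc zu by (auto simp: cz_def cu_def)
  have x: "vnorm m x \<le> A + B * (cz + cu)"
    unfolding x_def A_def B_def
    by (rule preactivation_vnorm_le) (use Suc.prems order_trans[OF vnorm_diff_le add_mono[OF z u]] in auto)
  have "vnorm m z' \<le> Ls * vnorm m (\<lambda>i. x i + u i)"
    unfolding z'_def by (rule vnorm_sig_le[OF Lip])
  also have "\<dots> \<le> Ls * (A + B * (cz + cu) + cu)"
    by (rule mult_left_mono[OF order_trans[OF vnorm_add_le add_mono[OF x u]] \<open>0 \<le> Ls\<close>])
  also have "\<dots> = fst (cADMM lam Ls n m R1 R2 Cy Cz Cu (Suc l))"
    by (simp only: cADMM_Suc_fst) (simp add: cz_def cu_def A_def B_def sig_zero algebra_simps)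
  finally have z': "vnorm m z' \<le> fst (cADMM lam Ls n m R1 R2 Cy Cz Cu (Suc l))" .
  have "vnorm m (\<lambda>i. u i + x i - z' i) \<le> vnorm m (\<lambda>i. u i + x i) + vnorm m z'"
    by (rule vnorm_diff_le)
  also have "\<dots> \<le> (cu + (A + B * (cz + cu))) + fst (cADMM lam Ls n m R1 R2 Cy Cz Cu (Suc l))"
    by (rule add_mono[OF order_trans[OF vnorm_add_le add_mono[OF u x]] z'])
  also have "\<dots> = snd (cADMM lam Ls n m R1 R2 Cy Cz Cu (Suc l))"
    by (simp only: cADMM_Suc_snd) (simp add: cz_def cu_def A_def B_def algebra_simps)
  finally have u': "vnorm m (\<lambda>i. u i + x i - z' i) \<le> snd (cADMM lam Ls n m R1 R2 Cy Cz Cu (Suc l))" .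
  have "admm lam n m W1 W2 y z0 u0 (Suc l) = (z', \<lambda>i. u i + x i - z' i)"
    by (simp add: zu x_def z'_def Let_def)
  then show ?case
    using z' u' by simp
qed

end

lemma bounded_mult_in_bigo:
  "b \<in> O[F](\<lambda>_. 1) \<Longrightarrow> f \<in> O[F](g) \<Longrightarrow> (\<lambda>x. b x * f x) \<in> O[F](g)"
  using landau_o.big.mult[of b F "\<lambda>_. 1" f g] by simp

lemma input_coeff_in_bigo_sqrt:
  assumes "n > 0"
  shows "(\<lambda>k::nat. c * (c10 n k + R1 / sqrt n) * sqrt n * Cy) \<in> O(\<lambda>k. sqrt (real k))"
proof -
  have "(\<lambda>k::nat. c * (c10 n k + R1 / sqrt n) * sqrt n * Cy)
      = (\<lambda>k. c * (sqrt n + R1) * Cy + 2 * c * Cy * sqrt (real k))"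
    using assms by (auto simp: c10_def field_simps)
  also have "\<dots> \<in> O(\<lambda>k. sqrt (real k))"
    by real_asymp
  finally show ?thesis .
qed

lemma cISTA_in_bigo_sqrt:
  assumes "n > 0"
  shows "(\<lambda>k::nat. cISTA lam Ls n k R1 R2 Cy Cx l) \<in> O(\<lambda>k. sqrt (real k))"
proof (induction l)
  case 0
  show ?case by simp
next
  case (Suc l)
  have coeff: "(\<lambda>k::nat. Ls * (c20 + R2 / sqrt (real k))) \<in> O(\<lambda>_. 1)"
    and const: "(\<lambda>k::nat. sig lam 0) \<in> O(\<lambda>k. sqrt (real k))"
    by real_asymp+
  show ?case
    unfolding cISTA.simps
    by (intro sum_in_bigo(1)[OF sum_in_bigo(1) const] input_coeff_in_bigo_sqrt[OF assms]
        bounded_mult_in_bigo[OF coeff Suc.IH])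
qed

lemma cADMM_in_bigo_sqrt:
  assumes "n > 0"
  shows "(\<lambda>k::nat. fst (cADMM lam Ls n k R1 R2 Cy Cz Cu l)) \<in> O(\<lambda>k. sqrt (real k))
       \<and> (\<lambda>k::nat. snd (cADMM lam Ls n k R1 R2 Cy Cz Cu l)) \<in> O(\<lambda>k. sqrt (real k))"
proof (induction l)
  case 0
  show ?case by simp
next
  case (Suc l)
  then have z: "(\<lambda>k::nat. fst (cADMM lam Ls n k R1 R2 Cy Cz Cu l)) \<in> O(\<lambda>k. sqrt (real k))"
    and u: "(\<lambda>k::nat. snd (cADMM lam Ls n k R1 R2 Cy Cz Cu l)) \<in> O(\<lambda>k. sqrt (real k))"
    by simp_all
  have coeffs: "(\<lambda>k::nat. Ls * (c20 + R2 / sqrt (real k))) \<in> O(\<lambda>_. 1)"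
      "(\<lambda>k::nat. Ls * (1 + c20 + R2 / sqrt (real k))) \<in> O(\<lambda>_. 1)"
      "(\<lambda>k::nat. c20 + R2 / sqrt (real k)) \<in> O(\<lambda>_. 1)"
      "(\<lambda>k::nat. c20 + R2 / sqrt (real k) + 1) \<in> O(\<lambda>_. 1)"
    and const: "(\<lambda>k::nat. sig lam 0) \<in> O(\<lambda>k. sqrt (real k))"
    by real_asymp+
  have input: "(\<lambda>k::nat. (c10 n k + R1 / sqrt n) * sqrt n * Cy) \<in> O(\<lambda>k. sqrt (real k))"
    using input_coeff_in_bigo_sqrt[OF assms, of 1] by simp
  have z': "(\<lambda>k::nat. fst (cADMM lam Ls n k R1 R2 Cy Cz Cu (Suc l))) \<in> O(\<lambda>k. sqrt (real k))"
    unfolding cADMM_Suc_fst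
    by (intro sum_in_bigo(1)[OF sum_in_bigo(1)[OF sum_in_bigo(1)] const]
        input_coeff_in_bigo_sqrt[OF assms]
        bounded_mult_in_bigo[OF coeffs(1) z] bounded_mult_in_bigo[OF coeffs(2) u])
  have "(\<lambda>k::nat. snd (cADMM lam Ls n k R1 R2 Cy Cz Cu (Suc l))) \<in> O(\<lambda>k. sqrt (real k))"
    unfolding cADMM_Suc_snd
    by (intro sum_in_bigo(1)[OF sum_in_bigo(1)[OF sum_in_bigo(1)] z'] input
        bounded_mult_in_bigo[OF coeffs(3) z] bounded_mult_in_bigo[OF coeffs(4) u])
  with z' show ?case ..
qed

theorem lemma4:
  fixes L n m :: nat and lam Ls Cy Cx Cz Cu R1 R2 :: real
    and y x0 z0 u0 :: "nat \<Rightarrow> real"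
    and W1 W2 W10 W20 :: "nat \<Rightarrow> nat \<Rightarrow> nat \<Rightarrow> real"
  assumes "L \<ge> 1" and "n \<ge> 1" and "m \<ge> 1" and "lam > 0"
    and Lip: "\<And>a b. \<bar>sig lam a - sig lam b\<bar> \<le> Ls * \<bar>a - b\<bar>"
    and "\<And>i. i < n \<Longrightarrow> \<bar>y i\<bar> \<le> Cy"
    and "\<And>i. i < m \<Longrightarrow> \<bar>x0 i\<bar> \<le> Cx"
    and "\<And>i. i < m \<Longrightarrow> \<bar>z0 i\<bar> \<le> Cz"
    and "\<And>i. i < m \<Longrightarrow> \<bar>u0 i\<bar> \<le> Cu"
    and "\<And>l. l \<in> {1..L} \<Longrightarrow> opnorm m n (W10 l) \<le> c10 n m * sqrt n"
    and "\<And>l. l \<in> {1..L} \<Longrightarrow> opnorm m m (W20 l) \<le> c20 * sqrt m"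
    and "frob_dist L m n W1 W10 \<le> R1"
    and "frob_dist L m m W2 W20 \<le> R2"
  shows "(\<forall>l\<in>{1..L}.
            vnorm m (lista lam n m W1 W2 y x0 l) \<le> cISTA lam Ls n m R1 R2 Cy Cx l
          \<and> vnorm m (fst (admm lam n m W1 W2 y z0 u0 l)) \<le> fst (cADMM lam Ls n m R1 R2 Cy Cz Cu l)
          \<and> vnorm m (snd (admm lam n m W1 W2 y z0 u0 l)) \<le> snd (cADMM lam Ls n m R1 R2 Cy Cz Cu l))
       \<and> (\<forall>l\<in>{1..L}.
            (\<lambda>k::nat. cISTA lam Ls n k R1 R2 Cy Cx l) \<in> O(\<lambda>k. sqrt (real k))
          \<and> (\<lambda>k::nat. fst (cADMM lam Ls n k R1 R2 Cy Cz Cu l)) \<in> O(\<lambda>k. sqrt (real k))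
          \<and> (\<lambda>k::nat. snd (cADMM lam Ls n k R1 R2 Cy Cz Cu l)) \<in> O(\<lambda>k. sqrt (real k)))"
proof (intro conjI ballI)
  fix l assume "l \<in> {1..L}"
  then have "l \<le> L" by simp
  note setting = assms(2,3,6,10-13)
  show "vnorm m (lista lam n m W1 W2 y x0 l) \<le> cISTA lam Ls n m R1 R2 Cy Cx l"
    using lista_vnorm_le[OF setting Lip assms(7) \<open>l \<le> L\<close>] .
  show "vnorm m (fst (admm lam n m W1 W2 y z0 u0 l)) \<le> fst (cADMM lam Ls n m R1 R2 Cy Cz Cu l)"
    and "vnorm m (snd (admm lam n m W1 W2 y z0 u0 l)) \<le> snd (cADMM lam Ls n m R1 R2 Cy Cz Cu l)"
    using admm_vnorm_le[OF setting Lip assms(8,9) \<open>l \<le> L\<close>] by simp_all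
next
  fix l
  have "n > 0"
    using assms(2) by simp
  then show "(\<lambda>k::nat. cISTA lam Ls n k R1 R2 Cy Cx l) \<in> O(\<lambda>k. sqrt (real k))"
    and "(\<lambda>k::nat. fst (cADMM lam Ls n k R1 R2 Cy Cz Cu l)) \<in> O(\<lambda>k. sqrt (real k))"
    and "(\<lambda>k::nat. snd (cADMM lam Ls n k R1 R2 Cy Cz Cu l)) \<in> O(\<lambda>k. sqrt (real k))"
    using cISTA_in_bigo_sqrt cADMM_in_bigo_sqrt by simp_all
qed

end
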